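(* Assume the setting in the context, in particular that $R\,D_{q,t}w=2S\,w$ and $R\,D_{q,t}f=2Sf+T$ where $R(x,t),S(x,t),T(x,t)$ are polynomials in $x$. For $n\ge2$ define $$\Phi_n=R\big(\epsilon_nD_{q,t}p_n-p_nD_{q,t}\epsilon_n\big)+2S\epsilon_n\,p_n(x,qt),$$ $$\Psi_n=a_nR\big(\epsilon_{n-1}D_{q,t}p_n-p_{n-1}D_{q,t}\epsilon_n\big)+S\big(2a_n\epsilon_{n-1}\,p_n(x,qt)-1\big).$$ Then $\Phi_n$ and $\Psi_n$ are polynomials in $x$, and for $n\ge2$ $$D_{q,t}Y_n=B_nY_n,\qquad B_n=\frac{1}{R-2t(1-q)S}\begin{pmatrix}\Psi_n-S&-a_n\Phi_n\\ a_n\Phi_{n-1}&\Psi_{n-1}-S-(x-b_{n-1})\Phi_{n-1}\end{pmatrix}.$$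
   Context: Fix $q\in\mathbb{C}$ with $0<|q|<1$. For a function $g(x,t)$, $D_{q,t}g(x,t)=\frac{g(x,t)-g(x,qt)}{t(1-q)}$. Let $w(x,t)$ be a weight depending on a parameter $t$ and $\mu_k(t)$ moments defining a linear functional $L_t(x^k)=\mu_k(t)$ with all Hankel determinants $\det(\mu_{i+j})_{i,j=0}^{n-1}$ nonzero and moments growing at most geometrically. Let $p_n(x,t)=\gamma_nx^n+\dots$ be the orthonormal polynomials for $L_t$; they satisfy $a_{n+1}p_{n+1}=(x-b_n)p_n-a_np_{n-1}$, $a_n=\gamma_{n-1}/\gamma_n$ (all depending on $t$). The Stieltjes function is $f(x,t)=\sum_{k\ge0}\mu_k(t)x^{-k-1}$; $\phi_{n-1}$ is the polynomial part (in $x$) of $fp_n$ and $\epsilon_n=fp_n-\phi_{n-1}$. $R,S$ are polynomials in $x$ (coefficients depending on $t$) with $R-2t(1-q)S\not\equiv 0$, satisfying $R\,D_{q,t}w=2Sw$. Set $Y_n=\begin{pmatrix}p_n&\epsilon_n/w\\ p_{n-1}&\epsilon_{n-1}/w\end{pmatrix}$. Identities are understood as identities of functions for $|x|$ large where all terms are defined. *)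

theory Defs
  imports "HOL-Computational_Algebra.Polynomial" "Jordan_Normal_Form.Determinant"
begin

definition qD :: "complex \<Rightarrow> (complex \<Rightarrow> complex \<Rightarrow> complex) \<Rightarrow> complex \<Rightarrow> complex \<Rightarrow> complex" where
  "qD q g x t = (g x t - g x (q * t)) / (t * (1 - q))"

definition qDmat :: "complex \<Rightarrow> (complex \<Rightarrow> complex \<Rightarrow> complex mat) \<Rightarrow> complex \<Rightarrow> complex \<Rightarrow> complex mat" where
  "qDmat q G x t = mat 2 2 (\<lambda>(i,j). (G x t $$ (i,j) - G x (q * t) $$ (i,j)) / (t * (1 - q)))"

definition Lfun :: "(nat \<Rightarrow> complex) \<Rightarrow> complex poly \<Rightarrow> complex" where
  "Lfun m P = (\<Sum>i\<le>degree P. coeff P i * m i)"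

definition hankel_det :: "(nat \<Rightarrow> complex) \<Rightarrow> nat \<Rightarrow> complex" where
  "hankel_det m n = det (mat n n (\<lambda>(i,j). m (i + j)))"

definition stieltjes :: "(nat \<Rightarrow> complex) \<Rightarrow> complex \<Rightarrow> complex" where
  "stieltjes m x = (\<Sum>k. m k / x ^ (k + 1))"

(* polynomial part (in x) of f * P, f the Stieltjes function of m *)
definition polypart :: "(nat \<Rightarrow> complex) \<Rightarrow> complex poly \<Rightarrow> complex poly" where
  "polypart m P = Poly (map (\<lambda>j. \<Sum>i\<in>{j+1..degree P}. coeff P i * m (i - j - 1)) [0..<degree P])"

definition epsf :: "(nat \<Rightarrow> complex) \<Rightarrow> complex poly \<Rightarrow> complex \<Rightarrow> complex" where
  "epsf m P x = stieltjes m x * poly P x - poly (polypart m P) x"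

(* data depending on t: mu k t moments, p n t orthonormal polynomials *)
definition pF :: "(nat \<Rightarrow> complex \<Rightarrow> complex poly) \<Rightarrow> nat \<Rightarrow> complex \<Rightarrow> complex \<Rightarrow> complex" where
  "pF p n x t = poly (p n t) x"

definition epsF :: "(nat \<Rightarrow> complex \<Rightarrow> complex) \<Rightarrow> (nat \<Rightarrow> complex \<Rightarrow> complex poly) \<Rightarrow> nat \<Rightarrow> complex \<Rightarrow> complex \<Rightarrow> complex" where
  "epsF mu p n x t = epsf (\<lambda>k. mu k t) (p n t) x"

definition acoef :: "(nat \<Rightarrow> complex \<Rightarrow> complex poly) \<Rightarrow> nat \<Rightarrow> complex \<Rightarrow> complex" where
  "acoef p n t = lead_coeff (p (n - 1) t) / lead_coeff (p n t)"

definition bcoef :: "(nat \<Rightarrow> complex \<Rightarrow> complex) \<Rightarrow> (nat \<Rightarrow> complex \<Rightarrow> complex poly) \<Rightarrow> nat \<Rightarrow> complex \<Rightarrow> complex" where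
  "bcoef mu p n t = Lfun (\<lambda>k. mu k t) ([:0, 1:] * p n t * p n t)"

definition PhiF :: "complex \<Rightarrow> (nat \<Rightarrow> complex \<Rightarrow> complex) \<Rightarrow> (nat \<Rightarrow> complex \<Rightarrow> complex poly)
    \<Rightarrow> (complex \<Rightarrow> complex poly) \<Rightarrow> (complex \<Rightarrow> complex poly) \<Rightarrow> nat \<Rightarrow> complex \<Rightarrow> complex \<Rightarrow> complex" where
  "PhiF q mu p R S n x t =
     poly (R t) x * (epsF mu p n x t * qD q (pF p n) x t - pF p n x t * qD q (epsF mu p n) x t)
     + 2 * poly (S t) x * epsF mu p n x t * pF p n x (q * t)"

definition PsiF :: "complex \<Rightarrow> (nat \<Rightarrow> complex \<Rightarrow> complex) \<Rightarrow> (nat \<Rightarrow> complex \<Rightarrow> complex poly)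
    \<Rightarrow> (complex \<Rightarrow> complex poly) \<Rightarrow> (complex \<Rightarrow> complex poly) \<Rightarrow> nat \<Rightarrow> complex \<Rightarrow> complex \<Rightarrow> complex" where
  "PsiF q mu p R S n x t =
     acoef p n t * poly (R t) x * (epsF mu p (n - 1) x t * qD q (pF p n) x t - pF p (n - 1) x t * qD q (epsF mu p n) x t)
     + poly (S t) x * (2 * acoef p n t * epsF mu p (n - 1) x t * pF p n x (q * t) - 1)"

definition Ymat :: "(nat \<Rightarrow> complex \<Rightarrow> complex) \<Rightarrow> (nat \<Rightarrow> complex \<Rightarrow> complex poly)
    \<Rightarrow> (complex \<Rightarrow> complex \<Rightarrow> complex) \<Rightarrow> nat \<Rightarrow> complex \<Rightarrow> complex \<Rightarrow> complex mat" where
  "Ymat mu p w n x t = mat_of_rows_list 2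
     [[pF p n x t, epsF mu p n x t / w x t],
      [pF p (n - 1) x t, epsF mu p (n - 1) x t / w x t]]"

definition Bmat :: "complex \<Rightarrow> (nat \<Rightarrow> complex \<Rightarrow> complex) \<Rightarrow> (nat \<Rightarrow> complex \<Rightarrow> complex poly)
    \<Rightarrow> (complex \<Rightarrow> complex poly) \<Rightarrow> (complex \<Rightarrow> complex poly) \<Rightarrow> nat \<Rightarrow> complex \<Rightarrow> complex \<Rightarrow> complex mat" where
  "Bmat q mu p R S n x t =
     (1 / (poly (R t) x - 2 * t * (1 - q) * poly (S t) x)) \<cdot>\<^sub>m mat_of_rows_list 2
     [[PsiF q mu p R S n x t - poly (S t) x, - acoef p n t * PhiF q mu p R S n x t],
      [acoef p n t * PhiF q mu p R S (n - 1) x t,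
       PsiF q mu p R S (n - 1) x t - poly (S t) x - (x - bcoef mu p (n - 1) t) * PhiF q mu p R S (n - 1) x t]]"

end

theory Submission
  imports Defs
begin

(* Fix the parameter t.  Everything in the theorem is an algebraic consequence of data at t:

   1. Orthonormal polynomials satisfy the three-term recurrence
        x p_n = a_(n+1) p_(n+1) + b_n p_n + a_n p_(n-1).
      Since L(p_n) = 0 for n >= 1, the polynomial parts phi_(n-1) of f p_n obey the same
      recurrence, hence so does eps_n = f p_n - phi_(n-1), whatever the value of f.
   2. The Casorati determinant a_n (p_n eps_(n-1) - p_(n-1) eps_n) is constant along the
      recurrence and equal to 1.
   3. Writing eps = f p - phi and using the Pearson equation R D_q f = 2 S f + T, all terms
      containing f cancel from Phi_n and Psi_n, which are thus explicit polynomials.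
   4. The four entries of D_(q,t) Y_n = B_n Y_n are rational identities in the values of p, eps
      and w, following from 2., the recurrence 1. and the Pearson equation R D_q w = 2 S w.

   Only q <> 1, t <> 0, degree and orthonormality of the p_n at t and the two Pearson equations
   enter. *)

(* The functional L(P) = sum_i coeff P i * m_i may be summed over any range covering deg P;
   this is what makes it linear. *)
lemma Lfun_upto: "degree P \<le> N \<Longrightarrow> Lfun m P = (\<Sum>i\<le>N. coeff P i * m i)"
  unfolding Lfun_def by (rule sum.mono_neutral_left) (auto simp: coeff_eq_0)

lemma Lfun_add: "Lfun m (P + Q) = Lfun m P + Lfun m Q"
proof -
  let ?N = "max (degree P) (degree Q)"
  have "Lfun m (P + Q) = (\<Sum>i\<le>?N. coeff (P + Q) i * m i)"
    by (rule Lfun_upto) (simp add: degree_add_le)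
  also have "\<dots> = (\<Sum>i\<le>?N. coeff P i * m i) + (\<Sum>i\<le>?N. coeff Q i * m i)"
    by (simp add: distrib_right sum.distrib)
  also have "\<dots> = Lfun m P + Lfun m Q"
    by (simp add: Lfun_upto[of P ?N] Lfun_upto[of Q ?N])
  finally show ?thesis .
qed

lemma Lfun_smult: "Lfun m (smult c P) = c * Lfun m P"
  by (simp add: Lfun_upto[of "smult c P" "degree P"] degree_smult_le Lfun_def
      sum_distrib_left mult.assoc)

lemma Lfun_sum: "finite A \<Longrightarrow> Lfun m (sum f A) = (\<Sum>a\<in>A. Lfun m (f a))"
  by (induction A rule: finite_induct) (simp_all add: Lfun_add, simp add: Lfun_def)

lemma coeff_polypart_upto: "degree P \<le> N \<Longrightarrow>
   coeff (polypart m P) j = (\<Sum>i\<in>{j+1..N}. coeff P i * m (i - j - 1))"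
  unfolding polypart_def
  by (auto simp: nth_default_def intro!: sum.mono_neutral_left) (auto simp: coeff_eq_0)

lemma polypart_add: "polypart m (P + Q) = polypart m P + polypart m Q"
proof (rule poly_eqI)
  fix j
  let ?N = "max (degree P) (degree Q)"
  have "coeff (polypart m (P + Q)) j = (\<Sum>i\<in>{j+1..?N}. coeff (P + Q) i * m (i - j - 1))"
    by (rule coeff_polypart_upto) (simp add: degree_add_le)
  then show "coeff (polypart m (P + Q)) j = coeff (polypart m P + polypart m Q) j"
    by (simp add: coeff_polypart_upto[of P ?N] coeff_polypart_upto[of Q ?N]
        distrib_right sum.distrib)
qed

lemma polypart_smult: "polypart m (smult c P) = smult c (polypart m P)"
proof (rule poly_eqI)
  fix j
  show "coeff (polypart m (smult c P)) j = coeff (smult c (polypart m P)) j"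
    by (simp add: coeff_polypart_upto[of "smult c P" "degree P"] degree_smult_le
        coeff_polypart_upto[of P "degree P"] sum_distrib_left mult.assoc)
qed

lemma polypart_pCons0: "polypart m (pCons 0 P) = pCons 0 (polypart m P) + [:Lfun m P:]"
proof (rule poly_eqI)
  fix j
  have "coeff (polypart m (pCons 0 P)) j = (\<Sum>i\<in>{j+1..Suc (degree P)}. coeff (pCons 0 P) i * m (i - j - 1))"
    by (rule coeff_polypart_upto) (simp add: degree_pCons_le)
  also have "\<dots> = (\<Sum>i\<in>{j..degree P}. coeff P i * m (i - j))"
    unfolding Suc_eq_plus1[symmetric] by (subst sum.shift_bounds_cl_Suc_ivl) simp
  finally show "coeff (polypart m (pCons 0 P)) j = coeff (pCons 0 (polypart m P) + [:Lfun m P:]) j"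
    by (cases j) (simp_all add: Lfun_def atLeast0AtMost coeff_polypart_upto[of P "degree P"])
qed

lemma cancel_top_coeff:
  fixes P Q :: "'a::field poly"
  assumes "degree P \<le> N" and "degree Q = N" and "Q \<noteq> 0" and "N \<le> i"
  shows "coeff (P - smult (coeff P N / lead_coeff Q) Q) i = 0"
proof (cases "i = N")
  case True
  have "lead_coeff Q \<noteq> 0" using assms(3) by simp
  then show ?thesis using True assms(2) by simp
next
  case False
  then show ?thesis using assms by (simp add: coeff_eq_0)
qed

locale orthonormal_family =
  fixes m :: "nat \<Rightarrow> complex" and ps :: "nat \<Rightarrow> complex poly"
  assumes degree_ps: "\<And>n. degree (ps n) = n"
    and orthonormal: "\<And>n k. Lfun m (ps n * ps k) = (if n = k then 1 else 0)"
begin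

definition rec_a :: "nat \<Rightarrow> complex" where
  "rec_a n = lead_coeff (ps (n - 1)) / lead_coeff (ps n)"

definition rec_b :: "nat \<Rightarrow> complex" where
  "rec_b n = Lfun m ([:0, 1:] * ps n * ps n)"

lemma ps_nonzero: "ps n \<noteq> 0"
  using orthonormal[of n n] by (auto simp: Lfun_def)

lemma expansion: "degree Q \<le> N \<Longrightarrow> \<exists>c. Q = (\<Sum>k\<le>N. smult (c k) (ps k))"
proof (induction N arbitrary: Q)
  case 0
  define c where "c = coeff Q 0 / lead_coeff (ps 0)"
  have "coeff (Q - smult c (ps 0)) i = 0" for i
    unfolding c_def by (rule cancel_top_coeff) (use 0 degree_ps ps_nonzero in auto)
  then have "Q - smult c (ps 0) = 0"
    by (simp add: poly_eq_iff)
  then show ?case by (intro exI[of _ "\<lambda>_. c"]) simp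
next
  case (Suc N)
  define c where "c = coeff Q (Suc N) / lead_coeff (ps (Suc N))"
  have "degree (Q - smult c (ps (Suc N))) \<le> N"
  proof (rule degree_le, intro allI impI)
    fix i assume "N < i"
    then show "coeff (Q - smult c (ps (Suc N))) i = 0"
      unfolding c_def by (intro cancel_top_coeff) (use Suc.prems degree_ps ps_nonzero in auto)
  qed
  then obtain d where d: "Q - smult c (ps (Suc N)) = (\<Sum>k\<le>N. smult (d k) (ps k))"
    using Suc.IH by blast
  have "(\<Sum>k\<le>Suc N. smult ((d(Suc N := c)) k) (ps k))
      = (\<Sum>k\<le>N. smult (d k) (ps k)) + smult c (ps (Suc N))"
    by (simp add: sum.atMost_Suc)
  also have "\<dots> = Q"
    using d by (simp add: diff_eq_eq)
  finally show ?case by metis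
qed

lemma fourier_expansion:
  assumes "degree Q \<le> N"
  shows "Q = (\<Sum>k\<le>N. smult (Lfun m (ps k * Q)) (ps k))"
proof -
  obtain c where c: "Q = (\<Sum>k\<le>N. smult (c k) (ps k))"
    using expansion[OF assms] by blast
  have "Lfun m (ps j * Q) = c j" if "j \<le> N" for j
  proof -
    have "Lfun m (ps j * Q) = (\<Sum>k\<le>N. c k * Lfun m (ps j * ps k))"
      unfolding c by (simp add: sum_distrib_left Lfun_sum Lfun_smult)
    also have "\<dots> = c j"
      using that by (simp add: orthonormal if_distrib cong: if_cong)
    finally show ?thesis .
  qed
  then show ?thesis by (metis (no_types, lifting) atMost_iff c sum.cong)
qed

lemma orthogonal_to_lower_degree:
  assumes "degree Q < n"
  shows "Lfun m (ps n * Q) = 0"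
proof -
  have "degree Q \<le> n - 1"
    using assms by simp
  then obtain c where c: "Q = (\<Sum>k\<le>n - 1. smult (c k) (ps k))"
    using expansion by blast
  have "Lfun m (ps n * Q) = (\<Sum>k\<le>n - 1. c k * Lfun m (ps n * ps k))"
    unfolding c by (simp add: sum_distrib_left Lfun_sum Lfun_smult)
  also have "\<dots> = 0"
    using assms by (intro sum.neutral) (auto simp: orthonormal)
  finally show ?thesis .
qed

lemma Lfun_ps: "n \<ge> 1 \<Longrightarrow> Lfun m (ps n) = 0"
  using orthogonal_to_lower_degree[of 1 n] by simp

lemma degree_x_ps: "degree ([:0, 1:] * ps n) = Suc n"
  using ps_nonzero[of n] by (simp add: degree_pCons_eq degree_ps)

(* L(p_n * x p_(n-1)) = a_n: only the leading term of x p_(n-1) = a_n p_n + (lower) contributes. *)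
lemma Lfun_x_ps_pred:
  assumes "n \<ge> 1"
  shows "Lfun m (ps n * ([:0, 1:] * ps (n - 1))) = rec_a n"
proof -
  let ?xp = "[:0, 1:] * ps (n - 1)"
  define r where "r = ?xp - smult (rec_a n) (ps n)"
  have top: "coeff ?xp n = lead_coeff (ps (n - 1))"
    using assms by (cases n) (simp_all add: degree_ps)
  have "degree r \<le> n - 1"
  proof (rule degree_le, intro allI impI)
    fix i assume "n - 1 < i"
    then show "coeff r i = 0"
      unfolding r_def rec_a_def top[symmetric]
      by (intro cancel_top_coeff) (use assms degree_x_ps degree_ps ps_nonzero in auto)
  qed
  then have "Lfun m (ps n * r) = 0"
    using assms by (intro orthogonal_to_lower_degree) simp
  moreover have "ps n * ?xp = smult (rec_a n) (ps n * ps n) + ps n * r"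
    by (simp add: r_def algebra_simps)
  ultimately show ?thesis
    by (simp add: Lfun_add Lfun_smult orthonormal)
qed

(* Three-term recurrence x p_n = a_(n+1) p_(n+1) + b_n p_n + a_n p_(n-1): in the Fourier expansion
   of x p_n every coefficient L(p_k x p_n) = L(p_n x p_k) with k < n - 1 vanishes. *)
lemma three_term_recurrence:
  assumes "n \<ge> 1"
  shows "[:0, 1:] * ps n = smult (rec_a (Suc n)) (ps (Suc n)) + smult (rec_b n) (ps n)
           + smult (rec_a n) (ps (n - 1))"
proof -
  define c where "c k = Lfun m (ps k * ([:0, 1:] * ps n))" for k
  have "[:0, 1:] * ps n = (\<Sum>k\<le>Suc n. smult (c k) (ps k))"
    unfolding c_def by (rule fourier_expansion) (unfold degree_x_ps, simp)
  also have "\<dots> = (\<Sum>k\<in>{n - 1, n, Suc n}. smult (c k) (ps k))"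
  proof (rule sum.mono_neutral_right)
    show "\<forall>k\<in>{..Suc n} - {n - 1, n, Suc n}. smult (c k) (ps k) = 0"
    proof
      fix k assume k: "k \<in> {..Suc n} - {n - 1, n, Suc n}"
      have "degree ([:0, 1:] * ps k) < n"
        unfolding degree_x_ps using k by auto
      then have "Lfun m (ps n * ([:0, 1:] * ps k)) = 0"
        by (rule orthogonal_to_lower_degree)
      then show "smult (c k) (ps k) = 0"
        by (simp add: c_def algebra_simps)
    qed
  qed auto
  also have "\<dots> = smult (c (Suc n)) (ps (Suc n)) + smult (c n) (ps n) + smult (c (n - 1)) (ps (n - 1))"
    using assms by (subst sum.insert) (auto simp: algebra_simps)
  also have "c (Suc n) = rec_a (Suc n)"
    using Lfun_x_ps_pred[of "Suc n"] by (simp add: c_def)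
  also have "c n = rec_b n"
    by (simp add: c_def rec_b_def algebra_simps)
  also have "c (n - 1) = rec_a n"
    using Lfun_x_ps_pred[OF assms] by (simp add: c_def algebra_simps)
  finally show ?thesis .
qed

(* The polynomial parts phi_(n-1) of f p_n satisfy the same recurrence, because L(p_n) = 0. *)
lemma polypart_recurrence:
  assumes "n \<ge> 1"
  shows "[:0, 1:] * polypart m (ps n) = smult (rec_a (Suc n)) (polypart m (ps (Suc n)))
           + smult (rec_b n) (polypart m (ps n)) + smult (rec_a n) (polypart m (ps (n - 1)))"
proof -
  have "[:0, 1:] * polypart m (ps n) = polypart m ([:0, 1:] * ps n)"
    using Lfun_ps[OF assms] by (simp add: polypart_pCons0)
  also have "\<dots> = smult (rec_a (Suc n)) (polypart m (ps (Suc n)))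
           + smult (rec_b n) (polypart m (ps n)) + smult (rec_a n) (polypart m (ps (n - 1)))"
    unfolding three_term_recurrence[OF assms] by (simp add: polypart_add polypart_smult)
  finally show ?thesis .
qed

(* The function of the second kind eps_n = f p_n - phi_(n-1), for an arbitrary value f of the
   Stieltjes function at the point x. *)
definition second_kind :: "complex \<Rightarrow> nat \<Rightarrow> complex \<Rightarrow> complex" where
  "second_kind f n x = f * poly (ps n) x - poly (polypart m (ps n)) x"

lemma recurrence_value:
  "n \<ge> 1 \<Longrightarrow> x * poly (ps n) x = rec_a (Suc n) * poly (ps (Suc n)) x
      + rec_b n * poly (ps n) x + rec_a n * poly (ps (n - 1)) x"
  using arg_cong[OF three_term_recurrence, of n "\<lambda>P. poly P x"] by simp

(* Being a combination of two solutions, eps_n solves the recurrence too. *)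
lemma second_kind_recurrence:
  assumes "n \<ge> 1"
  shows "x * second_kind f n x = rec_a (Suc n) * second_kind f (Suc n) x
      + rec_b n * second_kind f n x + rec_a n * second_kind f (n - 1) x"
  using recurrence_value[OF assms, of x]
    arg_cong[OF polypart_recurrence[OF assms], of "\<lambda>P. poly P x"]
  unfolding second_kind_def by (simp add: algebra_simps)

(* Casorati determinant of the two solutions p_n and eps_n: it is constant along the
   recurrence, and equals 1 at n = 1 since gamma_0^2 m_0 = L(p_0^2) = 1. *)
lemma casorati:
  "n \<ge> 1 \<Longrightarrow> rec_a n * (poly (ps n) x * second_kind f (n - 1) x
      - poly (ps (n - 1)) x * second_kind f n x) = 1"
proof (induction n rule: nat_induct_at_least)
  case base
  have p0: "ps 0 = [:lead_coeff (ps 0):]"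
    using degree_ps[of 0] degree_0_id by metis
  have "lead_coeff (ps 0) * lead_coeff (ps 0) * m 0 = 1"
    using orthonormal[of 0 0] by (subst (asm) p0, subst (asm) p0) (simp add: Lfun_def)
  moreover have "polypart m (ps 0) = 0"
    by (simp add: polypart_def degree_ps)
  moreover have "poly (polypart m (ps 1)) x = lead_coeff (ps 1) * m 0"
    by (simp add: polypart_def degree_ps)
  moreover have "poly (ps 0) x = lead_coeff (ps 0)"
    by (subst p0) simp
  moreover have "lead_coeff (ps 1) \<noteq> 0"
    using ps_nonzero[of 1] by simp
  ultimately show ?case
    by (simp add: second_kind_def rec_a_def degree_ps field_simps)
next
  case (Suc n)
  let ?e = "\<lambda>k. second_kind f k x" and ?p = "\<lambda>k. poly (ps k) x"
  have rp: "rec_a (Suc n) * ?p (Suc n) = x * ?p n - rec_b n * ?p n - rec_a n * ?p (n - 1)"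
    using recurrence_value[OF Suc.hyps, of x] by (simp add: algebra_simps)
  have re: "rec_a (Suc n) * ?e (Suc n) = x * ?e n - rec_b n * ?e n - rec_a n * ?e (n - 1)"
    using second_kind_recurrence[OF Suc.hyps, of x f] by (simp add: algebra_simps)
  have "rec_a (Suc n) * (?p (Suc n) * ?e n - ?p n * ?e (Suc n))
      = (rec_a (Suc n) * ?p (Suc n)) * ?e n - ?p n * (rec_a (Suc n) * ?e (Suc n))"
    by (simp add: algebra_simps)
  also have "\<dots> = rec_a n * (?p n * ?e (n - 1) - ?p (n - 1) * ?e n)"
    unfolding rp re by (simp add: algebra_simps)
  finally show ?case
    using Suc.IH by simp
qed

end

(* Key cancellation: if R D_q f = 2 S f + T, then in the mixed q-Wronskian of
   eps_k = f P1 - psi1 and eps_n = f P - psi all terms involving f drop out.  Here h = t(1-q),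
   P, psi are values at t and Pq, psi_q, fq values at q t. *)
lemma mixed_wronskian_closed_form:
  fixes h :: complex
  assumes pearson: "R * ((f - fq) / h) = 2 * S * f + T"
  shows "R * ((f * P1 - \<psi>1) * ((P - Pq) / h) - P1 * (((f * P - \<psi>) - (fq * Pq - \<psi>q)) / h))
           + 2 * S * (f * P1 - \<psi>1) * Pq
         = R * (P1 * ((\<psi> - \<psi>q) / h) - \<psi>1 * ((P - Pq) / h)) - T * P1 * Pq - 2 * S * \<psi>1 * Pq"
proof -
  have "R * ((f * P1 - \<psi>1) * ((P - Pq) / h) - P1 * (((f * P - \<psi>) - (fq * Pq - \<psi>q)) / h))
           + 2 * S * (f * P1 - \<psi>1) * Pq
      = R * (P1 * ((\<psi> - \<psi>q) / h) - \<psi>1 * ((P - Pq) / h)) - P1 * Pq * (R * ((f - fq) / h))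
           + 2 * S * (f * P1 - \<psi>1) * Pq"
    unfolding divide_inverse by (simp add: algebra_simps)
  also have "\<dots> = R * (P1 * ((\<psi> - \<psi>q) / h) - \<psi>1 * ((P - Pq) / h)) - T * P1 * Pq - 2 * S * \<psi>1 * Pq"
    unfolding pearson by (simp add: algebra_simps)
  finally show ?thesis .
qed

(* The polynomial produced by this cancellation for the pair (eps_k, p_n): with psi_j the
   polynomial part of f p_j,  R (p_k D_q psi_n - psi_k D_q p_n) - T p_k p_n(qt) - 2 S psi_k p_n(qt). *)
definition Phi_poly :: "complex \<Rightarrow> (nat \<Rightarrow> complex \<Rightarrow> complex) \<Rightarrow> (nat \<Rightarrow> complex \<Rightarrow> complex poly)
    \<Rightarrow> (complex \<Rightarrow> complex poly) \<Rightarrow> (complex \<Rightarrow> complex poly) \<Rightarrow> (complex \<Rightarrow> complex poly)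
    \<Rightarrow> nat \<Rightarrow> nat \<Rightarrow> complex \<Rightarrow> complex poly" where
  "Phi_poly q mu p R S T k n t =
     (let \<psi> = \<lambda>j s. polypart (\<lambda>i. mu i s) (p j s) in
       smult (1 / (t * (1 - q))) (R t * (p k t * (\<psi> n t - \<psi> n (q * t)) - \<psi> k t * (p n t - p n (q * t))))
       - T t * p k t * p n (q * t) - smult 2 (S t * \<psi> k t * p n (q * t)))"

lemma epsF_eq: "epsF mu p j x s = stieltjes (\<lambda>k. mu k s) x * pF p j x s - poly (polypart (\<lambda>k. mu k s) (p j s)) x"
  by (simp add: epsF_def epsf_def pF_def)

lemma mixed_Phi_value:
  assumes "poly (R t) x * qD q (\<lambda>x t. stieltjes (\<lambda>k. mu k t) x) x t
            = 2 * poly (S t) x * stieltjes (\<lambda>k. mu k t) x + poly (T t) x"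
  shows "poly (R t) x * (epsF mu p k x t * qD q (pF p n) x t - pF p k x t * qD q (epsF mu p n) x t)
           + 2 * poly (S t) x * epsF mu p k x t * pF p n x (q * t)
         = poly (Phi_poly q mu p R S T k n t) x"
proof -
  let ?f = "\<lambda>s. stieltjes (\<lambda>k. mu k s) x" and ?h = "t * (1 - q)"
  let ?\<psi> = "\<lambda>j s. poly (polypart (\<lambda>i. mu i s) (p j s)) x"
  have pearson: "poly (R t) x * ((?f t - ?f (q * t)) / ?h) = 2 * poly (S t) x * ?f t + poly (T t) x"
    using assms by (simp add: qD_def)
  have "poly (R t) x * (epsF mu p k x t * qD q (pF p n) x t - pF p k x t * qD q (epsF mu p n) x t)
           + 2 * poly (S t) x * epsF mu p k x t * pF p n x (q * t)
      = poly (R t) x * ((?f t * pF p k x t - ?\<psi> k t) * ((pF p n x t - pF p n x (q * t)) / ?h)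
          - pF p k x t * (((?f t * pF p n x t - ?\<psi> n t)
          - (?f (q * t) * pF p n x (q * t) - ?\<psi> n (q * t))) / ?h))
          + 2 * poly (S t) x * (?f t * pF p k x t - ?\<psi> k t) * pF p n x (q * t)"
    unfolding qD_def epsF_eq ..
  also have "\<dots> = poly (R t) x * (pF p k x t * ((?\<psi> n t - ?\<psi> n (q * t)) / ?h)
          - ?\<psi> k t * ((pF p n x t - pF p n x (q * t)) / ?h))
          - poly (T t) x * pF p k x t * pF p n x (q * t) - 2 * poly (S t) x * ?\<psi> k t * pF p n x (q * t)"
    by (rule mixed_wronskian_closed_form[OF pearson])
  also have "\<dots> = poly (Phi_poly q mu p R S T k n t) x"
    by (simp add: Phi_poly_def pF_def divide_inverse algebra_simps)
  finally show ?thesis .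
qed

(* Phi_n = Phi_poly for (n,n) and Psi_n = a_n Phi_poly for (n-1,n) - S are polynomials for large |x|. *)
lemma Phi_Psi_polynomial:
  assumes "\<exists>r. \<forall>x. r < norm x \<longrightarrow>
          poly (R t) x * qD q (\<lambda>x t. stieltjes (\<lambda>k. mu k t) x) x t
            = 2 * poly (S t) x * stieltjes (\<lambda>k. mu k t) x + poly (T t) x"
  shows "\<exists>P r. \<forall>x. r < norm x \<longrightarrow> PhiF q mu p R S n x t = poly P x"
    and "\<exists>P r. \<forall>x. r < norm x \<longrightarrow> PsiF q mu p R S n x t = poly P x"
proof -
  obtain r where r: "\<And>x. r < norm x \<Longrightarrow> poly (R t) x * qD q (\<lambda>x t. stieltjes (\<lambda>k. mu k t) x) x t
            = 2 * poly (S t) x * stieltjes (\<lambda>k. mu k t) x + poly (T t) x"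
    using assms by blast
  have Phi: "PhiF q mu p R S n x t = poly (Phi_poly q mu p R S T n n t) x" if "r < norm x" for x
    unfolding PhiF_def by (rule mixed_Phi_value[where R = R and S = S and T = T and mu = mu and t = t, OF r[OF that]])
  have Psi: "PsiF q mu p R S n x t = poly (smult (acoef p n t) (Phi_poly q mu p R S T (n - 1) n t) - S t) x"
    if "r < norm x" for x
  proof -
    have "PsiF q mu p R S n x t = acoef p n t * (poly (R t) x * (epsF mu p (n - 1) x t * qD q (pF p n) x t
          - pF p (n - 1) x t * qD q (epsF mu p n) x t)
          + 2 * poly (S t) x * epsF mu p (n - 1) x t * pF p n x (q * t)) - poly (S t) x"
      by (simp add: PsiF_def algebra_simps)
    also have "\<dots> = poly (smult (acoef p n t) (Phi_poly q mu p R S T (n - 1) n t) - S t) x"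
      by (simp add: mixed_Phi_value[where R = R and S = S and T = T and mu = mu and t = t,
            OF r[OF that]])
    finally show ?thesis .
  qed
  show "\<exists>P r. \<forall>x. r < norm x \<longrightarrow> PhiF q mu p R S n x t = poly P x"
    using Phi by blast
  show "\<exists>P r. \<forall>x. r < norm x \<longrightarrow> PsiF q mu p R S n x t = poly P x"
    using Psi by blast
qed

lemma scaled_mat2_mult:
  "(k \<cdot>\<^sub>m mat_of_rows_list 2 [[a, b], [c, d]]) * mat_of_rows_list 2 [[e, f], [g, h :: complex]]
   = mat_of_rows_list 2 [[k * (a * e + b * g), k * (a * f + b * h)], [k * (c * e + d * g), k * (c * f + d * h)]]"
  by (rule eq_matI)
    (auto simp: mat_of_rows_list_def scalar_prod_def less_2_cases_iff less_Suc_eq algebra_simps)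

lemma qDmat_Ymat: "qDmat q (Ymat mu p w n) x t = mat_of_rows_list 2
  [[(pF p n x t - pF p n x (q * t)) / (t * (1 - q)),
    (epsF mu p n x t / w x t - epsF mu p n x (q * t) / w x (q * t)) / (t * (1 - q))],
   [(pF p (n - 1) x t - pF p (n - 1) x (q * t)) / (t * (1 - q)),
    (epsF mu p (n - 1) x t / w x t - epsF mu p (n - 1) x (q * t) / w x (q * t)) / (t * (1 - q))]]"
  unfolding qDmat_def Ymat_def
  by (rule eq_matI) (auto simp: mat_of_rows_list_def less_2_cases_iff less_Suc_eq)

(* Each entry is a rational identity in the values
   of p, eps, w at t and q t: the first row follows from the Casorati identity for n (and the
   Pearson equation for w in the second column), the second row in addition from the Casorati
   identity for n-1 and the recurrences for p_(n-1), eps_(n-1).  With the four denominators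
   replaced by formal inverses these are ideal-membership problems decided by Groebner bases. *)
lemma Y_equation_at_point:
  assumes h: "t * (1 - q) \<noteq> 0"
    and D: "poly (R t) x - 2 * t * (1 - q) * poly (S t) x \<noteq> 0"
    and w: "w x t \<noteq> 0" "w x (q * t) \<noteq> 0"
    and pearson_w: "poly (R t) x * qD q w x t = 2 * poly (S t) x * w x t"
    and casorati_n: "acoef p n t * (pF p n x t * epsF mu p (n - 1) x t
                       - pF p (n - 1) x t * epsF mu p n x t) = 1"
    and casorati_n1: "acoef p (n - 1) t * (pF p (n - 1) x t * epsF mu p (n - 1 - 1) x t
                       - pF p (n - 1 - 1) x t * epsF mu p (n - 1) x t) = 1"
    and recurrence_p: "x * pF p (n - 1) x t = acoef p n t * pF p n x t
          + bcoef mu p (n - 1) t * pF p (n - 1) x t + acoef p (n - 1) t * pF p (n - 1 - 1) x t"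
    and recurrence_eps: "x * epsF mu p (n - 1) x t = acoef p n t * epsF mu p n x t
          + bcoef mu p (n - 1) t * epsF mu p (n - 1) x t + acoef p (n - 1) t * epsF mu p (n - 1 - 1) x t"
  shows "qDmat q (Ymat mu p w n) x t = Bmat q mu p R S n x t * Ymat mu p w n x t"
proof -
  obtain hinv dinv winv wqinv where inv: "inverse (t * (1 - q)) = hinv"
    "inverse (poly (R t) x - 2 * t * (1 - q) * poly (S t) x) = dinv"
    "inverse (w x t) = winv" "inverse (w x (q * t)) = wqinv"
    by blast
  have inverses: "t * (1 - q) * hinv = 1" "(poly (R t) x - 2 * t * (1 - q) * poly (S t) x) * dinv = 1"
    "w x t * winv = 1" "w x (q * t) * wqinv = 1"
    using right_inverse[OF h] right_inverse[OF D] right_inverse[OF w(1)] right_inverse[OF w(2)]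
    by (simp_all only: inv)
  have pearson: "poly (R t) x * ((w x t - w x (q * t)) * hinv) = 2 * poly (S t) x * w x t"
    using pearson_w inv(1) by (simp add: qD_def divide_inverse)
  show ?thesis
    unfolding qDmat_Ymat Bmat_def Ymat_def scaled_mat2_mult PhiF_def PsiF_def qD_def
      divide_inverse mult_1_left inv
    apply (rule arg_cong[where f = "mat_of_rows_list 2"])
    apply (simp only: list.inject)
    using inverses pearson casorati_n casorati_n1 recurrence_p recurrence_eps
    by (intro conjI TrueI refl; Groebner_Basis.algebra)
qed

lemma Y_q_difference_equation:
  assumes "q \<noteq> 1" and "t \<noteq> 0" and "2 \<le> n"
    and deg: "\<And>n. degree (p n t) = n"
    and orthonormal: "\<And>n k. Lfun (\<lambda>i. mu i t) (p n t * p k t) = (if n = k then 1 else 0)"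
    and Pearson_w: "\<exists>r. \<forall>x. r < norm x \<longrightarrow> poly (R t) x * qD q w x t = 2 * poly (S t) x * w x t"
  shows "\<exists>r. \<forall>x. r < norm x \<and> w x t \<noteq> 0 \<and> w x (q * t) \<noteq> 0
               \<and> poly (R t) x - 2 * t * (1 - q) * poly (S t) x \<noteq> 0 \<longrightarrow>
             qDmat q (Ymat mu p w n) x t = Bmat q mu p R S n x t * Ymat mu p w n x t"
proof -
  interpret O: orthonormal_family "\<lambda>i. mu i t" "\<lambda>n. p n t"
    using deg orthonormal by unfold_locales
  have a: "O.rec_a k = acoef p k t" and b: "O.rec_b k = bcoef mu p k t" for k
    by (simp_all add: O.rec_a_def acoef_def O.rec_b_def bcoef_def)
  have eps: "epsF mu p k x t = O.second_kind (stieltjes (\<lambda>i. mu i t) x) k x" for k x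
    by (simp add: epsF_def epsf_def O.second_kind_def)
  have n: "Suc (n - 1) = n" "n - 1 \<ge> 1" "n \<ge> 1"
    using \<open>2 \<le> n\<close> by auto
  obtain r where r: "\<And>x. r < norm x \<Longrightarrow> poly (R t) x * qD q w x t = 2 * poly (S t) x * w x t"
    using Pearson_w by blast
  show ?thesis
  proof (intro exI[of _ r] allI impI)
    fix x assume x: "r < norm x \<and> w x t \<noteq> 0 \<and> w x (q * t) \<noteq> 0
               \<and> poly (R t) x - 2 * t * (1 - q) * poly (S t) x \<noteq> 0"
    let ?f = "stieltjes (\<lambda>i. mu i t) x"
    show "qDmat q (Ymat mu p w n) x t = Bmat q mu p R S n x t * Ymat mu p w n x t"
    proof (rule Y_equation_at_point)
      show "t * (1 - q) \<noteq> 0"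
        using assms(1,2) by simp
      show "acoef p n t * (pF p n x t * epsF mu p (n - 1) x t - pF p (n - 1) x t * epsF mu p n x t) = 1"
        using O.casorati[OF n(3), of x ?f] by (simp add: eps pF_def a)
      show "acoef p (n - 1) t * (pF p (n - 1) x t * epsF mu p (n - 1 - 1) x t
              - pF p (n - 1 - 1) x t * epsF mu p (n - 1) x t) = 1"
        using O.casorati[OF n(2), of x ?f] by (simp add: eps pF_def a)
      show "x * pF p (n - 1) x t = acoef p n t * pF p n x t
              + bcoef mu p (n - 1) t * pF p (n - 1) x t + acoef p (n - 1) t * pF p (n - 1 - 1) x t"
        using O.recurrence_value[OF n(2), of x] unfolding n(1) by (simp add: pF_def a b)
      show "x * epsF mu p (n - 1) x t = acoef p n t * epsF mu p n x t
              + bcoef mu p (n - 1) t * epsF mu p (n - 1) x t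
              + acoef p (n - 1) t * epsF mu p (n - 1 - 1) x t"
        using O.second_kind_recurrence[OF n(2), of x ?f] unfolding n(1) by (simp add: eps a b)
    qed (use x r in auto)
  qed
qed

theorem mainTheorem2:
  fixes q :: complex
    and U :: "complex set"
    and mu :: "nat \<Rightarrow> complex \<Rightarrow> complex"
    and p :: "nat \<Rightarrow> complex \<Rightarrow> complex poly"
    and w :: "complex \<Rightarrow> complex \<Rightarrow> complex"
    and R S T :: "complex \<Rightarrow> complex poly"
  assumes q: "0 < norm q" "norm q < 1"
    and U: "\<And>t. t \<in> U \<Longrightarrow> t \<noteq> 0 \<and> q * t \<in> U"
    and hankel: "\<And>t n. t \<in> U \<Longrightarrow> hankel_det (\<lambda>k. mu k t) n \<noteq> 0"
    and growth: "\<And>t. t \<in> U \<Longrightarrow> \<exists>C M. \<forall>k. norm (mu k t) \<le> C * M ^ k"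
    and deg: "\<And>t n. t \<in> U \<Longrightarrow> degree (p n t) = n"
    and orthonormal: "\<And>t n m. t \<in> U \<Longrightarrow>
          Lfun (\<lambda>k. mu k t) (p n t * p m t) = (if n = m then 1 else 0)"
    and RS_nonzero: "\<And>t. t \<in> U \<Longrightarrow> R t - smult (2 * t * (1 - q)) (S t) \<noteq> 0"
    and Pearson_w: "\<And>t. t \<in> U \<Longrightarrow> \<exists>r. \<forall>x. r < norm x \<longrightarrow>
          poly (R t) x * qD q w x t = 2 * poly (S t) x * w x t"
    and Pearson_f: "\<And>t. t \<in> U \<Longrightarrow> \<exists>r. \<forall>x. r < norm x \<longrightarrow>
          poly (R t) x * qD q (\<lambda>x t. stieltjes (\<lambda>k. mu k t) x) x t
            = 2 * poly (S t) x * stieltjes (\<lambda>k. mu k t) x + poly (T t) x"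
  shows "\<forall>t\<in>U. \<forall>n\<ge>2.
          (\<exists>P r. \<forall>x. r < norm x \<longrightarrow> PhiF q mu p R S n x t = poly P x)
        \<and> (\<exists>P r. \<forall>x. r < norm x \<longrightarrow> PsiF q mu p R S n x t = poly P x)
        \<and> (\<exists>r. \<forall>x. r < norm x \<and> w x t \<noteq> 0 \<and> w x (q * t) \<noteq> 0
               \<and> poly (R t) x - 2 * t * (1 - q) * poly (S t) x \<noteq> 0 \<longrightarrow>
             qDmat q (Ymat mu p w n) x t = Bmat q mu p R S n x t * Ymat mu p w n x t)"
proof (intro ballI allI impI conjI)
  fix t :: complex and n :: nat
  assume t: "t \<in> U" and n: "2 \<le> n"
  have "q \<noteq> 1" and "t \<noteq> 0"
    using q U[OF t] by auto
  show "\<exists>P r. \<forall>x. r < norm x \<longrightarrow> PhiF q mu p R S n x t = poly P x"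
    and "\<exists>P r. \<forall>x. r < norm x \<longrightarrow> PsiF q mu p R S n x t = poly P x"
    using Phi_Psi_polynomial[where R = R and S = S and T = T and mu = mu and t = t, OF Pearson_f[OF t]]
    by blast+
  show "\<exists>r. \<forall>x. r < norm x \<and> w x t \<noteq> 0 \<and> w x (q * t) \<noteq> 0
          \<and> poly (R t) x - 2 * t * (1 - q) * poly (S t) x \<noteq> 0 \<longrightarrow>
        qDmat q (Ymat mu p w n) x t = Bmat q mu p R S n x t * Ymat mu p w n x t"
    by (rule Y_q_difference_equation[where R = R and S = S and mu = mu and p = p and w = w,
          OF \<open>q \<noteq> 1\<close> \<open>t \<noteq> 0\<close> n deg[OF t] orthonormal[OF t] Pearson_w[OF t]])
qed

end
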